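(* Let $(\mathbf F,\mathbf A)$ be an enriched cut-free Gentzen $ru$-frame with $\mathbf F=(G,T,N,K)$. For all $a,b\in A$ and closed sets $X,Y$ of $\mathbf F$: (1) if $1^{\mathbf A}$ is defined, then $1^{\mathbf A}\in\gamma_N(\{\varepsilon\})\subseteq\{1^{\mathbf A}\}^{\lhd}$; (2) for $\bullet\in\{\wedge,\vee,\cdot,\backslash,/\}$: if $a\bullet^{\mathbf A}b$ is defined, $a\in X\subseteq\{a\}^{\lhd}$ and $b\in Y\subseteq\{b\}^{\lhd}$, then $a\bullet^{\mathbf A}b\in X\bullet^{\mathbf F^+}Y\subseteq\{a\bullet^{\mathbf A}b\}^{\lhd}$; (3) if $!^{\mathbf A}a$ is defined and $a\in X\subseteq\{a\}^{\lhd}$, then $!^{\mathbf A}a\in\, !X\subseteq\{!^{\mathbf A}a\}^{\lhd}$; (4) if $(\mathbf F,\mathbf A)$ is an enriched cut-free Gentzen $ruz$-frame and $0^{\mathbf A}$ is defined, then $0^{\mathbf A}\in\{\epsilon\}^{\lhd}\subseteq\{0^{\mathbf A}\}^{\lhd}$; (5) if $(\mathbf F,\mathbf A)$ is moreover an enriched Gentzen frame (i.e. satisfies [cut]), then the map $a\mapsto\{a\}^{\lhd}$ is a homomorphism of partial algebras from $\mathbf A$ to $\mathbf F^+$ (whenever $f^{\mathbf A}(\vec a)$ is defined, its image equals $f^{\mathbf F^+}$ applied to the images); (6) if $N$ is antisymmetric on $A$ ($aNb$ and $bNa$ imply $a=b$ for $a,b\in A$), then the map $a\mapsto\{a\}^{\lhd}$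 is injective.
   Context: Enriched $ru$-frame: $\mathbf F=(G,T,N,K)$ with $(G,\cdot,\varepsilon)$ a unital groupoid (not necessarily associative), $T$ a set, $N\subseteq G\times T$ nuclear (for all $x,y\in G,z\in T$ there are $x\backslash\!\!\backslash z, z/\!\!/y\in T$ with $x\cdot y\,N\,z\iff y\,N\,x\backslash\!\!\backslash z\iff x\,N\,z/\!\!/y$), $K$ a sub-unital-groupoid of $G$; an enriched $ruz$-frame additionally has $\epsilon\in T$. $X^{\rhd}=\{t\in T\mid\forall x\in X\,xNt\}$, $Y^{\lhd}=\{g\in G\mid\forall y\in Y\,gNy\}$, $\gamma_N(X)=X^{\rhd\lhd}$; closed sets are those with $\gamma_N(X)=X$. $\mathbf F^+$: universe the closed sets, $X\wedge Y=X\cap Y$, $X\vee Y=\gamma_N(X\cup Y)$, $X\cdot Y=\gamma_N(X\circ Y)$ with $X\circ Y=\{x\cdot y\mid x\in X,y\in Y\}$, $X\backslash Y=\{z\mid X\circ\{z\}\subseteq Y\}$, $Y/X=\{z\mid \{z\}\circ X\subseteq Y\}$, $!X=\gamma_N(X\cap K)$, unit $\gamma_N(\{\varepsilon\})$, and in the $ruz$ case zero $\{\epsilon\}^{\lhd}$. Enriched cut-free Gentzen $ru$-frame: a pair $(\mathbf F,\mathbf A)$ with $\mathbf F$ an enriched $ru$-frame and $\mathbf A$ a partial algebra in $\{\wedge,\vee,\cdot,\backslash,/,!,1\}$, together with injections of $A$ into $G$ and into $T$ and of $A^!=\{!^{\mathbf A}a\mid a\in\operatorname{dom}!^{\mathbf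 A}\}$ into $K$ (elements of $A$ are identified with their images; in particular $\{a\}^{\lhd}$ uses $a$ as an element of $T$), such that for all $x,y\in G$, $z\in T$, $a,a_1,a_2,b\in A$, $k\in K$ (whenever the displayed operations of $\mathbf A$ are defined): $\varepsilon\,N\,1^{\mathbf A}$; $a\,N\,a$; $\varepsilon Nz\Rightarrow 1^{\mathbf A}Nz$; $a\cdot b\,N\,z\Rightarrow a\cdot^{\mathbf A}b\,N\,z$; $xNa,\,yNb\Rightarrow x\cdot y\,N\,a\cdot^{\mathbf A}b$; $xNa,\,bNz\Rightarrow x\cdot(a\backslash^{\mathbf A}b)\,N\,z$; $a\cdot x\,N\,b\Rightarrow x\,N\,a\backslash^{\mathbf A}b$; $xNa,\,bNz\Rightarrow (b/^{\mathbf A}a)\cdot x\,N\,z$; $x\cdot a\,N\,b\Rightarrow x\,N\,b/^{\mathbf A}a$; $a_iNz\Rightarrow a_1\wedge^{\mathbf A}a_2\,N\,z$; $xNa,\,xNb\Rightarrow x\,N\,a\wedge^{\mathbf A}b$; $aNz,\,bNz\Rightarrow a\vee^{\mathbf A}b\,N\,z$; $xNa_i\Rightarrow x\,N\,a_1\vee^{\mathbf A}a_2$; $aNz\Rightarrow !^{\mathbf A}a\,N\,z$; $kNa\Rightarrow k\,N\,!^{\mathbf A}a$. An enriched cut-free Gentzen $ruz$-frame uses an enriched $ruz$-frame and a partial algebra with additional constant $0$, and also requires $0^{\mathbf A}N\epsilon$ and $xN\epsilon\Rightarrow xN0^{\mathbf A}$. An enriched Gentzen frame additionally satisfies [cut]: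 $xNa$ and $aNz$ imply $xNz$ (for $x\in G$, $a\in A$, $z\in T$). *)

theory Defs
  imports Main
begin

text \<open>Enriched ru-frame F = (G,T,N,K): G is the type 'g, T the type 't.\<close>
record ('g, 't) ruframe =
  Fmul :: "'g \<Rightarrow> 'g \<Rightarrow> 'g"
  Feps :: "'g"
  FN   :: "'g \<Rightarrow> 't \<Rightarrow> bool"
  FK   :: "'g set"

text \<open>Partial algebra in the signature {meet, join, mult, ldiv, rdiv, !, 1} (and 0 for ruz).
  Undefinedness is None. Ardiv b a stands for b / a.\<close>
record 'a palg =
  Ameet :: "'a \<Rightarrow> 'a \<Rightarrow> 'a option"
  Ajoin :: "'a \<Rightarrow> 'a \<Rightarrow> 'a option"
  Amul  :: "'a \<Rightarrow> 'a \<Rightarrow> 'a option"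
  Aldiv :: "'a \<Rightarrow> 'a \<Rightarrow> 'a option"
  Ardiv :: "'a \<Rightarrow> 'a \<Rightarrow> 'a option"
  Abang :: "'a \<Rightarrow> 'a option"
  Aone  :: "'a option"
  Azero :: "'a option"

definition unital_groupoid :: "('g \<Rightarrow> 'g \<Rightarrow> 'g) \<Rightarrow> 'g \<Rightarrow> bool" where
  "unital_groupoid m e \<longleftrightarrow> (\<forall>x. m e x = x \<and> m x e = x)"

definition nuclear :: "('g \<Rightarrow> 'g \<Rightarrow> 'g) \<Rightarrow> ('g \<Rightarrow> 't \<Rightarrow> bool) \<Rightarrow> bool" where
  "nuclear m N \<longleftrightarrow> (\<exists>ld rd. \<forall>x y z.
      (N (m x y) z \<longleftrightarrow> N y (ld x z)) \<and> (N (m x y) z \<longleftrightarrow> N x (rd z y)))"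

definition sub_unital_groupoid :: "('g \<Rightarrow> 'g \<Rightarrow> 'g) \<Rightarrow> 'g \<Rightarrow> 'g set \<Rightarrow> bool" where
  "sub_unital_groupoid m e K \<longleftrightarrow> e \<in> K \<and> (\<forall>x\<in>K. \<forall>y\<in>K. m x y \<in> K)"

definition enriched_ru_frame :: "('g, 't, 'z) ruframe_scheme \<Rightarrow> bool" where
  "enriched_ru_frame F \<longleftrightarrow> unital_groupoid (Fmul F) (Feps F) \<and> nuclear (Fmul F) (FN F)
     \<and> sub_unital_groupoid (Fmul F) (Feps F) (FK F)"

definition rhd :: "('g, 't, 'z) ruframe_scheme \<Rightarrow> 'g set \<Rightarrow> 't set" where
  "rhd F X = {t. \<forall>x\<in>X. FN F x t}"

definition lhd :: "('g, 't, 'z) ruframe_scheme \<Rightarrow> 't set \<Rightarrow> 'g set" where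
  "lhd F Y = {g. \<forall>y\<in>Y. FN F g y}"

definition gammaN :: "('g, 't, 'z) ruframe_scheme \<Rightarrow> 'g set \<Rightarrow> 'g set" where
  "gammaN F X = lhd F (rhd F X)"

definition closed_set :: "('g, 't, 'z) ruframe_scheme \<Rightarrow> 'g set \<Rightarrow> bool" where
  "closed_set F X \<longleftrightarrow> gammaN F X = X"

definition cplx :: "('g, 't, 'z) ruframe_scheme \<Rightarrow> 'g set \<Rightarrow> 'g set \<Rightarrow> 'g set" where
  "cplx F X Y = {Fmul F x y | x y. x \<in> X \<and> y \<in> Y}"

definition plus_meet :: "('g, 't, 'z) ruframe_scheme \<Rightarrow> 'g set \<Rightarrow> 'g set \<Rightarrow> 'g set" where
  "plus_meet F X Y = X \<inter> Y"

definition plus_join :: "('g, 't, 'z) ruframe_scheme \<Rightarrow> 'g set \<Rightarrow> 'g set \<Rightarrow> 'g set" where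
  "plus_join F X Y = gammaN F (X \<union> Y)"

definition plus_mul :: "('g, 't, 'z) ruframe_scheme \<Rightarrow> 'g set \<Rightarrow> 'g set \<Rightarrow> 'g set" where
  "plus_mul F X Y = gammaN F (cplx F X Y)"

definition plus_ldiv :: "('g, 't, 'z) ruframe_scheme \<Rightarrow> 'g set \<Rightarrow> 'g set \<Rightarrow> 'g set" where
  "plus_ldiv F X Y = {z. cplx F X {z} \<subseteq> Y}"

definition plus_rdiv :: "('g, 't, 'z) ruframe_scheme \<Rightarrow> 'g set \<Rightarrow> 'g set \<Rightarrow> 'g set" where
  "plus_rdiv F Y X = {z. cplx F {z} X \<subseteq> Y}"

definition plus_bang :: "('g, 't, 'z) ruframe_scheme \<Rightarrow> 'g set \<Rightarrow> 'g set" where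
  "plus_bang F X = gammaN F (X \<inter> FK F)"

definition plus_one :: "('g, 't, 'z) ruframe_scheme \<Rightarrow> 'g set" where
  "plus_one F = gammaN F {Feps F}"

definition plus_zero :: "('g, 't, 'z) ruframe_scheme \<Rightarrow> 't \<Rightarrow> 'g set" where
  "plus_zero F e = lhd F {e}"

text \<open>Enriched cut-free Gentzen ru-frame (F, A) with injections ig : A \<rightarrow> G and it : A \<rightarrow> T;
  the injection of A^! into K is the restriction of ig.\<close>
definition cf_gentzen_ru ::
  "('g, 't, 'z) ruframe_scheme \<Rightarrow> ('a, 'w) palg_scheme \<Rightarrow> ('a \<Rightarrow> 'g) \<Rightarrow> ('a \<Rightarrow> 't) \<Rightarrow> bool" where
  "cf_gentzen_ru F A ig it \<longleftrightarrow>
    (let N = FN F; m = Fmul F; e = Feps F; K = FK F in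
     enriched_ru_frame F \<and> inj ig \<and> inj it \<and>
     (\<forall>a c. Abang A a = Some c \<longrightarrow> ig c \<in> K) \<and>
     (\<forall>u. Aone A = Some u \<longrightarrow> N e (it u)) \<and>
     (\<forall>a. N (ig a) (it a)) \<and>
     (\<forall>u z. Aone A = Some u \<longrightarrow> N e z \<longrightarrow> N (ig u) z) \<and>
     (\<forall>a b c z. Amul A a b = Some c \<longrightarrow> N (m (ig a) (ig b)) z \<longrightarrow> N (ig c) z) \<and>
     (\<forall>a b c x y. Amul A a b = Some c \<longrightarrow> N x (it a) \<longrightarrow> N y (it b) \<longrightarrow> N (m x y) (it c)) \<and>
     (\<forall>a b c x z. Aldiv A a b = Some c \<longrightarrow> N x (it a) \<longrightarrow> N (ig b) z \<longrightarrow> N (m x (ig c)) z) \<and>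
     (\<forall>a b c x. Aldiv A a b = Some c \<longrightarrow> N (m (ig a) x) (it b) \<longrightarrow> N x (it c)) \<and>
     (\<forall>a b c x z. Ardiv A b a = Some c \<longrightarrow> N x (it a) \<longrightarrow> N (ig b) z \<longrightarrow> N (m (ig c) x) z) \<and>
     (\<forall>a b c x. Ardiv A b a = Some c \<longrightarrow> N (m x (ig a)) (it b) \<longrightarrow> N x (it c)) \<and>
     (\<forall>a1 a2 c z. Ameet A a1 a2 = Some c \<longrightarrow> (N (ig a1) z \<or> N (ig a2) z) \<longrightarrow> N (ig c) z) \<and>
     (\<forall>a b c x. Ameet A a b = Some c \<longrightarrow> N x (it a) \<longrightarrow> N x (it b) \<longrightarrow> N x (it c)) \<and>
     (\<forall>a b c z. Ajoin A a b = Some c \<longrightarrow> N (ig a) z \<longrightarrow> N (ig b) z \<longrightarrow> N (ig c) z) \<and>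
     (\<forall>a1 a2 c x. Ajoin A a1 a2 = Some c \<longrightarrow> (N x (it a1) \<or> N x (it a2)) \<longrightarrow> N x (it c)) \<and>
     (\<forall>a c z. Abang A a = Some c \<longrightarrow> N (ig a) z \<longrightarrow> N (ig c) z) \<and>
     (\<forall>a c k. Abang A a = Some c \<longrightarrow> k \<in> K \<longrightarrow> N k (it a) \<longrightarrow> N k (it c)))"

definition cf_gentzen_ruz ::
  "('g, 't, 'z) ruframe_scheme \<Rightarrow> ('a, 'w) palg_scheme \<Rightarrow> ('a \<Rightarrow> 'g) \<Rightarrow> ('a \<Rightarrow> 't) \<Rightarrow> 't \<Rightarrow> bool" where
  "cf_gentzen_ruz F A ig it e \<longleftrightarrow> cf_gentzen_ru F A ig it \<and>
     (\<forall>u. Azero A = Some u \<longrightarrow> FN F (ig u) e \<and> (\<forall>x. FN F x e \<longrightarrow> FN F x (it u)))"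

definition gentzen_cut ::
  "('g, 't, 'z) ruframe_scheme \<Rightarrow> ('a \<Rightarrow> 'g) \<Rightarrow> ('a \<Rightarrow> 't) \<Rightarrow> bool" where
  "gentzen_cut F ig it \<longleftrightarrow> (\<forall>x a z. FN F x (it a) \<longrightarrow> FN F (ig a) z \<longrightarrow> FN F x z)"

end

theory Submission
  imports Defs
begin

text \<open>Each left rule of a cut-free Gentzen frame puts the image of a compound element
  into the corresponding operation of closed sets, and each right rule bounds that operation
  by \<open>{a}\<^sup>\<lhd>\<close>. With cut, a closed set containing \<open>a\<close> contains all of \<open>{a}\<^sup>\<lhd>\<close>, so taking
  the arguments to be the closed sets \<open>{a}\<^sup>\<lhd>\<close> themselves the squeeze becomes an equality;
  closedness of the residuals is where nuclearity of \<open>N\<close> enters.\<close>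

lemma mem_lhd_singleton_iff [simp]: "x \<in> lhd F {t} \<longleftrightarrow> FN F x t"
  by (simp add: lhd_def)

lemma mem_gammaN_iff: "x \<in> gammaN F S \<longleftrightarrow> (\<forall>z. (\<forall>y\<in>S. FN F y z) \<longrightarrow> FN F x z)"
  by (simp add: gammaN_def lhd_def rhd_def)

lemma subset_gammaN: "S \<subseteq> gammaN F S"
  by (auto simp: mem_gammaN_iff)

lemma gammaN_subset_lhd: "S \<subseteq> lhd F Y \<Longrightarrow> gammaN F S \<subseteq> lhd F Y"
  by (auto simp: gammaN_def lhd_def rhd_def)

lemma closed_set_lhd: "closed_set F (lhd F Y)"
  unfolding closed_set_def gammaN_def lhd_def rhd_def by auto

lemma closed_set_gammaN: "closed_set F (gammaN F S)"
  unfolding gammaN_def by (rule closed_set_lhd)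

lemma closed_set_iff_gammaN_subset: "closed_set F X \<longleftrightarrow> gammaN F X \<subseteq> X"
  unfolding closed_set_def using subset_gammaN[of X F] by blast

lemma closed_set_mem_iff:
  "closed_set F X \<Longrightarrow> x \<in> X \<longleftrightarrow> (\<forall>z. (\<forall>y\<in>X. FN F y z) \<longrightarrow> FN F x z)"
  unfolding closed_set_def by (metis mem_gammaN_iff)

lemma closed_set_mem_upward:
  assumes "closed_set F X" "x \<in> X" "\<And>z. FN F x z \<Longrightarrow> FN F y z"
  shows "y \<in> X"
  using assms closed_set_mem_iff by metis

lemma closed_set_Int:
  assumes X: "closed_set F X" and Y: "closed_set F Y"
  shows "closed_set F (X \<inter> Y)"
proof (unfold closed_set_iff_gammaN_subset, rule subsetI)
  fix x assume "x \<in> gammaN F (X \<inter> Y)"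
  then have "\<forall>z. (\<forall>y\<in>X. FN F y z) \<longrightarrow> FN F x z" "\<forall>z. (\<forall>y\<in>Y. FN F y z) \<longrightarrow> FN F x z"
    by (auto simp: mem_gammaN_iff)
  then show "x \<in> X \<inter> Y" using closed_set_mem_iff[OF X] closed_set_mem_iff[OF Y] by blast
qed

lemma closed_set_plus_one: "closed_set F (plus_one F)"
  unfolding plus_one_def by (rule closed_set_gammaN)

lemma closed_set_plus_meet: "closed_set F X \<Longrightarrow> closed_set F Y \<Longrightarrow> closed_set F (plus_meet F X Y)"
  unfolding plus_meet_def by (rule closed_set_Int)

lemma closed_set_plus_join: "closed_set F (plus_join F X Y)"
  unfolding plus_join_def by (rule closed_set_gammaN)

lemma closed_set_plus_mul: "closed_set F (plus_mul F X Y)"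
  unfolding plus_mul_def by (rule closed_set_gammaN)

lemma closed_set_plus_bang: "closed_set F (plus_bang F X)"
  unfolding plus_bang_def by (rule closed_set_gammaN)

lemma closed_set_plus_ldiv:
  assumes "nuclear (Fmul F) (FN F)" and Y: "closed_set F Y"
  shows "closed_set F (plus_ldiv F X Y)"
proof (unfold closed_set_iff_gammaN_subset, rule subsetI)
  obtain ld where ld: "\<And>x y z. FN F (Fmul F x y) z \<longleftrightarrow> FN F y (ld x z)"
    using assms(1) unfolding nuclear_def by blast
  fix w assume w: "w \<in> gammaN F (plus_ldiv F X Y)"
  have "Fmul F x w \<in> Y" if "x \<in> X" for x
    unfolding closed_set_mem_iff[OF Y]
  proof (intro allI impI)
    fix z assume "\<forall>y\<in>Y. FN F y z"
    have "\<forall>v\<in>plus_ldiv F X Y. FN F v (ld x z)"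
    proof
      fix v assume "v \<in> plus_ldiv F X Y"
      then have "Fmul F x v \<in> Y" using that by (auto simp: plus_ldiv_def cplx_def)
      then show "FN F v (ld x z)" using \<open>\<forall>y\<in>Y. FN F y z\<close> ld by blast
    qed
    then show "FN F (Fmul F x w) z" using w ld by (simp add: mem_gammaN_iff)
  qed
  then show "w \<in> plus_ldiv F X Y" by (auto simp: plus_ldiv_def cplx_def)
qed

lemma closed_set_plus_rdiv:
  assumes "nuclear (Fmul F) (FN F)" and X: "closed_set F X"
  shows "closed_set F (plus_rdiv F X Y)"
proof (unfold closed_set_iff_gammaN_subset, rule subsetI)
  obtain rd where rd: "\<And>x y z. FN F (Fmul F x y) z \<longleftrightarrow> FN F x (rd z y)"
    using assms(1) unfolding nuclear_def by blast
  fix w assume w: "w \<in> gammaN F (plus_rdiv F X Y)"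
  have "Fmul F w y \<in> X" if "y \<in> Y" for y
    unfolding closed_set_mem_iff[OF X]
  proof (intro allI impI)
    fix z assume "\<forall>x\<in>X. FN F x z"
    have "\<forall>v\<in>plus_rdiv F X Y. FN F v (rd z y)"
    proof
      fix v assume "v \<in> plus_rdiv F X Y"
      then have "Fmul F v y \<in> X" using that by (auto simp: plus_rdiv_def cplx_def)
      then show "FN F v (rd z y)" using \<open>\<forall>x\<in>X. FN F x z\<close> rd by blast
    qed
    then show "FN F (Fmul F w y) z" using w rd by (simp add: mem_gammaN_iff)
  qed
  then show "w \<in> plus_rdiv F X Y" by (auto simp: plus_rdiv_def cplx_def)
qed

lemma lhd_it_eq_closed_set:
  assumes cut: "gentzen_cut F ig it" and Z: "closed_set F Z"
    and "ig a \<in> Z" "Z \<subseteq> lhd F {it a}"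
  shows "lhd F {it a} = Z"
proof
  show "lhd F {it a} \<subseteq> Z"
  proof
    fix x assume "x \<in> lhd F {it a}"
    then show "x \<in> Z"
      using cut \<open>ig a \<in> Z\<close> unfolding closed_set_mem_iff[OF Z] gentzen_cut_def by auto
  qed
qed fact

lemma plus_zero_bounds:
  assumes "cf_gentzen_ruz F A ig it e" "Azero A = Some u"
  shows "ig u \<in> plus_zero F e" "plus_zero F e \<subseteq> lhd F {it u}"
  using assms by (auto simp: cf_gentzen_ruz_def plus_zero_def)

lemma lhd_it_zero:
  assumes "gentzen_cut F ig it" "cf_gentzen_ruz F A ig it e" "Azero A = Some u"
  shows "lhd F {it u} = plus_zero F e"
  using assms(1) plus_zero_bounds[OF assms(2,3)] unfolding plus_zero_def
  by (intro lhd_it_eq_closed_set closed_set_lhd)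

locale cf_gentzen_frame =
  fixes F :: "('g, 't, 'z) ruframe_scheme" and A :: "('a, 'w) palg_scheme"
    and ig :: "'a \<Rightarrow> 'g" and it :: "'a \<Rightarrow> 't"
  assumes cf_gentzen_ru: "cf_gentzen_ru F A ig it"
begin

lemmas gentzen_rules = cf_gentzen_ru[unfolded cf_gentzen_ru_def Let_def]

lemma nuclear: "nuclear (Fmul F) (FN F)"
  using gentzen_rules by (simp add: enriched_ru_frame_def)

lemma N_ig_it: "FN F (ig a) (it a)"
  using gentzen_rules by (elim conjE) meson

lemma ig_mem_lhd_it: "ig a \<in> lhd F {it a}"
  by (simp add: N_ig_it)

lemma one_right: "Aone A = Some u \<Longrightarrow> FN F (Feps F) (it u)"
  using gentzen_rules by (elim conjE) meson

lemma one_left: "Aone A = Some u \<Longrightarrow> FN F (Feps F) z \<Longrightarrow> FN F (ig u) z"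
  using gentzen_rules by (elim conjE) meson

lemma meet_left: "Ameet A a b = Some c \<Longrightarrow> FN F (ig a) z \<or> FN F (ig b) z \<Longrightarrow> FN F (ig c) z"
  using gentzen_rules by (elim conjE) meson

lemma meet_right:
  "Ameet A a b = Some c \<Longrightarrow> FN F x (it a) \<Longrightarrow> FN F x (it b) \<Longrightarrow> FN F x (it c)"
  using gentzen_rules by (elim conjE) meson

lemma join_left:
  "Ajoin A a b = Some c \<Longrightarrow> FN F (ig a) z \<Longrightarrow> FN F (ig b) z \<Longrightarrow> FN F (ig c) z"
  using gentzen_rules by (elim conjE) meson

lemma join_right: "Ajoin A a b = Some c \<Longrightarrow> FN F x (it a) \<or> FN F x (it b) \<Longrightarrow> FN F x (it c)"
  using gentzen_rules by (elim conjE) meson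

lemma mul_left: "Amul A a b = Some c \<Longrightarrow> FN F (Fmul F (ig a) (ig b)) z \<Longrightarrow> FN F (ig c) z"
  using gentzen_rules by (elim conjE) meson

lemma mul_right:
  "Amul A a b = Some c \<Longrightarrow> FN F x (it a) \<Longrightarrow> FN F y (it b) \<Longrightarrow> FN F (Fmul F x y) (it c)"
  using gentzen_rules by (elim conjE) meson

lemma ldiv_left:
  "Aldiv A a b = Some c \<Longrightarrow> FN F x (it a) \<Longrightarrow> FN F (ig b) z \<Longrightarrow> FN F (Fmul F x (ig c)) z"
  using gentzen_rules by (elim conjE) meson

lemma ldiv_right: "Aldiv A a b = Some c \<Longrightarrow> FN F (Fmul F (ig a) x) (it b) \<Longrightarrow> FN F x (it c)"
  using gentzen_rules by (elim conjE) meson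

lemma rdiv_left:
  "Ardiv A b a = Some c \<Longrightarrow> FN F x (it a) \<Longrightarrow> FN F (ig b) z \<Longrightarrow> FN F (Fmul F (ig c) x) z"
  using gentzen_rules by (elim conjE) meson

lemma rdiv_right: "Ardiv A b a = Some c \<Longrightarrow> FN F (Fmul F x (ig a)) (it b) \<Longrightarrow> FN F x (it c)"
  using gentzen_rules by (elim conjE) meson

lemma bang_in_K: "Abang A a = Some c \<Longrightarrow> ig c \<in> FK F"
  using gentzen_rules by (elim conjE) meson

lemma bang_left: "Abang A a = Some c \<Longrightarrow> FN F (ig a) z \<Longrightarrow> FN F (ig c) z"
  using gentzen_rules by (elim conjE) meson

lemma bang_right: "Abang A a = Some c \<Longrightarrow> k \<in> FK F \<Longrightarrow> FN F k (it a) \<Longrightarrow> FN F k (it c)"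
  using gentzen_rules by (elim conjE) meson

lemma plus_one_bounds:
  assumes "Aone A = Some u"
  shows "ig u \<in> plus_one F" "plus_one F \<subseteq> lhd F {it u}"
  using one_left[OF assms] one_right[OF assms] gammaN_subset_lhd[of "{Feps F}" F "{it u}"]
  by (auto simp: plus_one_def mem_gammaN_iff)

lemma plus_meet_bounds:
  assumes c: "Ameet A a b = Some c" and X: "closed_set F X" and Y: "closed_set F Y"
    and "ig a \<in> X" "X \<subseteq> lhd F {it a}" "ig b \<in> Y" "Y \<subseteq> lhd F {it b}"
  shows "ig c \<in> plus_meet F X Y" "plus_meet F X Y \<subseteq> lhd F {it c}"
proof -
  have "ig c \<in> X" "ig c \<in> Y"
    using closed_set_mem_upward[OF X \<open>ig a \<in> X\<close>] closed_set_mem_upward[OF Y \<open>ig b \<in> Y\<close>]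
      meet_left[OF c] by blast+
  then show "ig c \<in> plus_meet F X Y" by (simp add: plus_meet_def)
  show "plus_meet F X Y \<subseteq> lhd F {it c}"
    using assms meet_right[OF c] by (auto simp: plus_meet_def subset_iff)
qed

lemma plus_join_bounds:
  assumes c: "Ajoin A a b = Some c"
    and "ig a \<in> X" "X \<subseteq> lhd F {it a}" "ig b \<in> Y" "Y \<subseteq> lhd F {it b}"
  shows "ig c \<in> plus_join F X Y" "plus_join F X Y \<subseteq> lhd F {it c}"
proof -
  show "ig c \<in> plus_join F X Y"
    using assms join_left[OF c] by (auto simp: plus_join_def mem_gammaN_iff)
  have "X \<union> Y \<subseteq> lhd F {it c}"
    using assms join_right[OF c] by auto
  then show "plus_join F X Y \<subseteq> lhd F {it c}"
    unfolding plus_join_def by (rule gammaN_subset_lhd)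
qed

lemma plus_mul_bounds:
  assumes c: "Amul A a b = Some c"
    and "ig a \<in> X" "X \<subseteq> lhd F {it a}" "ig b \<in> Y" "Y \<subseteq> lhd F {it b}"
  shows "ig c \<in> plus_mul F X Y" "plus_mul F X Y \<subseteq> lhd F {it c}"
proof -
  have "Fmul F (ig a) (ig b) \<in> cplx F X Y"
    using assms by (auto simp: cplx_def)
  then show "ig c \<in> plus_mul F X Y"
    using mul_left[OF c] by (auto simp: plus_mul_def mem_gammaN_iff)
  have "cplx F X Y \<subseteq> lhd F {it c}"
    using assms mul_right[OF c] by (auto simp: cplx_def subset_iff)
  then show "plus_mul F X Y \<subseteq> lhd F {it c}"
    unfolding plus_mul_def by (rule gammaN_subset_lhd)
qed

lemma plus_ldiv_bounds:
  assumes c: "Aldiv A a b = Some c" and Y: "closed_set F Y"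
    and "ig a \<in> X" "X \<subseteq> lhd F {it a}" "ig b \<in> Y" "Y \<subseteq> lhd F {it b}"
  shows "ig c \<in> plus_ldiv F X Y" "plus_ldiv F X Y \<subseteq> lhd F {it c}"
proof -
  have "Fmul F x (ig c) \<in> Y" if "x \<in> X" for x
  proof (rule closed_set_mem_upward[OF Y \<open>ig b \<in> Y\<close>])
    have "FN F x (it a)" using that assms by auto
    then show "FN F (Fmul F x (ig c)) z" if "FN F (ig b) z" for z
      using ldiv_left[OF c] that by blast
  qed
  then show "ig c \<in> plus_ldiv F X Y"
    by (auto simp: plus_ldiv_def cplx_def)
  show "plus_ldiv F X Y \<subseteq> lhd F {it c}"
  proof
    fix w assume "w \<in> plus_ldiv F X Y"
    then have "Fmul F (ig a) w \<in> Y" using \<open>ig a \<in> X\<close> by (auto simp: plus_ldiv_def cplx_def)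
    then show "w \<in> lhd F {it c}" using \<open>Y \<subseteq> lhd F {it b}\<close> ldiv_right[OF c] by auto
  qed
qed

lemma plus_rdiv_bounds:
  assumes c: "Ardiv A a b = Some c" and X: "closed_set F X"
    and "ig a \<in> X" "X \<subseteq> lhd F {it a}" "ig b \<in> Y" "Y \<subseteq> lhd F {it b}"
  shows "ig c \<in> plus_rdiv F X Y" "plus_rdiv F X Y \<subseteq> lhd F {it c}"
proof -
  have "Fmul F (ig c) y \<in> X" if "y \<in> Y" for y
  proof (rule closed_set_mem_upward[OF X \<open>ig a \<in> X\<close>])
    have "FN F y (it b)" using that assms by auto
    then show "FN F (Fmul F (ig c) y) z" if "FN F (ig a) z" for z
      using rdiv_left[OF c] that by blast
  qed
  then show "ig c \<in> plus_rdiv F X Y"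
    by (auto simp: plus_rdiv_def cplx_def)
  show "plus_rdiv F X Y \<subseteq> lhd F {it c}"
  proof
    fix w assume "w \<in> plus_rdiv F X Y"
    then have "Fmul F w (ig b) \<in> X" using \<open>ig b \<in> Y\<close> by (auto simp: plus_rdiv_def cplx_def)
    then show "w \<in> lhd F {it c}" using \<open>X \<subseteq> lhd F {it a}\<close> rdiv_right[OF c] by auto
  qed
qed

lemma plus_bang_bounds:
  assumes c: "Abang A a = Some c" and X: "closed_set F X"
    and "ig a \<in> X" "X \<subseteq> lhd F {it a}"
  shows "ig c \<in> plus_bang F X" "plus_bang F X \<subseteq> lhd F {it c}"
proof -
  have "ig c \<in> X"
    using closed_set_mem_upward[OF X \<open>ig a \<in> X\<close> bang_left[OF c]] .
  then show "ig c \<in> plus_bang F X"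
    using bang_in_K[OF c] subset_gammaN by (fastforce simp: plus_bang_def)
  have "X \<inter> FK F \<subseteq> lhd F {it c}"
    using assms bang_right[OF c] by auto
  then show "plus_bang F X \<subseteq> lhd F {it c}"
    unfolding plus_bang_def by (rule gammaN_subset_lhd)
qed

lemma lhd_it_one:
  assumes "gentzen_cut F ig it" "Aone A = Some u"
  shows "lhd F {it u} = plus_one F"
  using assms plus_one_bounds by (intro lhd_it_eq_closed_set closed_set_plus_one)

lemma lhd_it_meet:
  assumes "gentzen_cut F ig it" "Ameet A a b = Some c"
  shows "lhd F {it c} = plus_meet F (lhd F {it a}) (lhd F {it b})"
  using assms plus_meet_bounds[OF _ closed_set_lhd closed_set_lhd ig_mem_lhd_it order_refl
      ig_mem_lhd_it order_refl]
  by (intro lhd_it_eq_closed_set closed_set_plus_meet closed_set_lhd)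

lemma lhd_it_join:
  assumes "gentzen_cut F ig it" "Ajoin A a b = Some c"
  shows "lhd F {it c} = plus_join F (lhd F {it a}) (lhd F {it b})"
  using assms plus_join_bounds[OF _ ig_mem_lhd_it order_refl ig_mem_lhd_it order_refl]
  by (intro lhd_it_eq_closed_set closed_set_plus_join)

lemma lhd_it_mul:
  assumes "gentzen_cut F ig it" "Amul A a b = Some c"
  shows "lhd F {it c} = plus_mul F (lhd F {it a}) (lhd F {it b})"
  using assms plus_mul_bounds[OF _ ig_mem_lhd_it order_refl ig_mem_lhd_it order_refl]
  by (intro lhd_it_eq_closed_set closed_set_plus_mul)

lemma lhd_it_ldiv:
  assumes "gentzen_cut F ig it" "Aldiv A a b = Some c"
  shows "lhd F {it c} = plus_ldiv F (lhd F {it a}) (lhd F {it b})"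
  using assms plus_ldiv_bounds[OF _ closed_set_lhd ig_mem_lhd_it order_refl ig_mem_lhd_it order_refl]
  by (intro lhd_it_eq_closed_set closed_set_plus_ldiv nuclear closed_set_lhd)

lemma lhd_it_rdiv:
  assumes "gentzen_cut F ig it" "Ardiv A a b = Some c"
  shows "lhd F {it c} = plus_rdiv F (lhd F {it a}) (lhd F {it b})"
  using assms plus_rdiv_bounds[OF _ closed_set_lhd ig_mem_lhd_it order_refl ig_mem_lhd_it order_refl]
  by (intro lhd_it_eq_closed_set closed_set_plus_rdiv nuclear closed_set_lhd)

lemma lhd_it_bang:
  assumes "gentzen_cut F ig it" "Abang A a = Some c"
  shows "lhd F {it c} = plus_bang F (lhd F {it a})"
  using assms plus_bang_bounds[OF _ closed_set_lhd ig_mem_lhd_it order_refl]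
  by (intro lhd_it_eq_closed_set closed_set_plus_bang)

lemma inj_lhd_it:
  assumes antisym: "\<And>a b. FN F (ig a) (it b) \<Longrightarrow> FN F (ig b) (it a) \<Longrightarrow> a = b"
  shows "inj (\<lambda>a. lhd F {it a})"
proof (rule injI)
  fix a b assume "lhd F {it a} = lhd F {it b}"
  then have "ig a \<in> lhd F {it b}" "ig b \<in> lhd F {it a}"
    using ig_mem_lhd_it by metis+
  then show "a = b" using antisym by simp
qed

end

theorem mainTheorem11:
  fixes F :: "('g, 't) ruframe" and A :: "'a palg"
    and ig :: "'a \<Rightarrow> 'g" and it :: "'a \<Rightarrow> 't"
  assumes G: "cf_gentzen_ru F A ig it"
  shows
   "(\<forall>u. Aone A = Some u \<longrightarrow>
        ig u \<in> plus_one F \<and> plus_one F \<subseteq> lhd F {it u})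
  \<and> (\<forall>a b c X Y. Ameet A a b = Some c \<longrightarrow> closed_set F X \<longrightarrow> closed_set F Y \<longrightarrow>
        ig a \<in> X \<longrightarrow> X \<subseteq> lhd F {it a} \<longrightarrow> ig b \<in> Y \<longrightarrow> Y \<subseteq> lhd F {it b} \<longrightarrow>
        ig c \<in> plus_meet F X Y \<and> plus_meet F X Y \<subseteq> lhd F {it c})
  \<and> (\<forall>a b c X Y. Ajoin A a b = Some c \<longrightarrow> closed_set F X \<longrightarrow> closed_set F Y \<longrightarrow>
        ig a \<in> X \<longrightarrow> X \<subseteq> lhd F {it a} \<longrightarrow> ig b \<in> Y \<longrightarrow> Y \<subseteq> lhd F {it b} \<longrightarrow>
        ig c \<in> plus_join F X Y \<and> plus_join F X Y \<subseteq> lhd F {it c})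
  \<and> (\<forall>a b c X Y. Amul A a b = Some c \<longrightarrow> closed_set F X \<longrightarrow> closed_set F Y \<longrightarrow>
        ig a \<in> X \<longrightarrow> X \<subseteq> lhd F {it a} \<longrightarrow> ig b \<in> Y \<longrightarrow> Y \<subseteq> lhd F {it b} \<longrightarrow>
        ig c \<in> plus_mul F X Y \<and> plus_mul F X Y \<subseteq> lhd F {it c})
  \<and> (\<forall>a b c X Y. Aldiv A a b = Some c \<longrightarrow> closed_set F X \<longrightarrow> closed_set F Y \<longrightarrow>
        ig a \<in> X \<longrightarrow> X \<subseteq> lhd F {it a} \<longrightarrow> ig b \<in> Y \<longrightarrow> Y \<subseteq> lhd F {it b} \<longrightarrow>
        ig c \<in> plus_ldiv F X Y \<and> plus_ldiv F X Y \<subseteq> lhd F {it c})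
  \<and> (\<forall>a b c X Y. Ardiv A a b = Some c \<longrightarrow> closed_set F X \<longrightarrow> closed_set F Y \<longrightarrow>
        ig a \<in> X \<longrightarrow> X \<subseteq> lhd F {it a} \<longrightarrow> ig b \<in> Y \<longrightarrow> Y \<subseteq> lhd F {it b} \<longrightarrow>
        ig c \<in> plus_rdiv F X Y \<and> plus_rdiv F X Y \<subseteq> lhd F {it c})
  \<and> (\<forall>a c X. Abang A a = Some c \<longrightarrow> closed_set F X \<longrightarrow>
        ig a \<in> X \<longrightarrow> X \<subseteq> lhd F {it a} \<longrightarrow>
        ig c \<in> plus_bang F X \<and> plus_bang F X \<subseteq> lhd F {it c})
  \<and> (\<forall>e u. cf_gentzen_ruz F A ig it e \<longrightarrow> Azero A = Some u \<longrightarrow>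
        ig u \<in> plus_zero F e \<and> plus_zero F e \<subseteq> lhd F {it u})
  \<and> (gentzen_cut F ig it \<longrightarrow>
        (\<forall>u. Aone A = Some u \<longrightarrow> lhd F {it u} = plus_one F)
      \<and> (\<forall>a b c. Ameet A a b = Some c \<longrightarrow>
           lhd F {it c} = plus_meet F (lhd F {it a}) (lhd F {it b}))
      \<and> (\<forall>a b c. Ajoin A a b = Some c \<longrightarrow>
           lhd F {it c} = plus_join F (lhd F {it a}) (lhd F {it b}))
      \<and> (\<forall>a b c. Amul A a b = Some c \<longrightarrow>
           lhd F {it c} = plus_mul F (lhd F {it a}) (lhd F {it b}))
      \<and> (\<forall>a b c. Aldiv A a b = Some c \<longrightarrow>
           lhd F {it c} = plus_ldiv F (lhd F {it a}) (lhd F {it b}))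
      \<and> (\<forall>a b c. Ardiv A a b = Some c \<longrightarrow>
           lhd F {it c} = plus_rdiv F (lhd F {it a}) (lhd F {it b}))
      \<and> (\<forall>a c. Abang A a = Some c \<longrightarrow>
           lhd F {it c} = plus_bang F (lhd F {it a}))
      \<and> (\<forall>e u. cf_gentzen_ruz F A ig it e \<longrightarrow> Azero A = Some u \<longrightarrow>
           lhd F {it u} = plus_zero F e))
  \<and> ((\<forall>a b. FN F (ig a) (it b) \<longrightarrow> FN F (ig b) (it a) \<longrightarrow> a = b) \<longrightarrow>
        inj (\<lambda>a. lhd F {it a}))"
proof -
  have frame: "cf_gentzen_frame F A ig it"
    using G by (rule cf_gentzen_frame.intro)
  note operation_laws = cf_gentzen_frame.plus_one_bounds[OF frame]
    cf_gentzen_frame.plus_meet_bounds[OF frame]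
    cf_gentzen_frame.plus_join_bounds[OF frame]
    cf_gentzen_frame.plus_mul_bounds[OF frame]
    cf_gentzen_frame.plus_ldiv_bounds[OF frame]
    cf_gentzen_frame.plus_rdiv_bounds[OF frame]
    cf_gentzen_frame.plus_bang_bounds[OF frame]
    cf_gentzen_frame.lhd_it_one[OF frame]
    cf_gentzen_frame.lhd_it_meet[OF frame]
    cf_gentzen_frame.lhd_it_join[OF frame]
    cf_gentzen_frame.lhd_it_mul[OF frame]
    cf_gentzen_frame.lhd_it_ldiv[OF frame]
    cf_gentzen_frame.lhd_it_rdiv[OF frame]
    cf_gentzen_frame.lhd_it_bang[OF frame]
  show ?thesis
    by (intro conjI allI impI)
      ((rule operation_laws plus_zero_bounds lhd_it_zero; assumption)
       | blast intro: cf_gentzen_frame.inj_lhd_it[OF frame])+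
qed

end
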